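(* Let $f:\mathbb{R}^d\to\mathbb{R}$ be differentiable, bounded from below with infimum $f^{\mathrm{inf}}=\inf_x f(x)\in\mathbb{R}$, and with $L$-Lipschitz gradient. For each $x\in\mathbb{R}^d$ let $g(x)$ be a random vector in $\mathbb{R}^d$ with $\mathbb{E}[g(x)]=\nabla f(x)$. Then: (1) If (M-SG) holds for some $\alpha\ge 0$, then (E-SG) holds for some $\alpha\ge 0$. (2) If (E-SG) holds for some $\alpha$, then (RG) holds for some $\alpha,\beta\ge 0$. (3) If (BV) holds for some $\sigma\ge 0$, then (RG) holds for some $\alpha,\beta\ge 0$. (4) If $f=\frac1n\sum_{i=1}^n f_i$ with each $f_i$ differentiable, $g(x)=\nabla f_i(x)$ with $i$ drawn uniformly from $\{1,\dots,n\}$, and (GC) holds for some $\eta>0$, then (RG) holds for some $\alpha,\beta\ge0$. (5) If (RG) holds for some $\alpha,\beta\ge 0$, then (ES) holds for some $A,B,C\ge 0$. (6) If $f(x)=\mathbb{E}_{\xi\sim\mathcal{D}}[f_\xi(x)]$ for a family of differentiable functions $f_\xi$, $g(x)=\nabla f_\xi(x)$ with $\xi\sim\mathcal{D}$, and (SS) holds, then (ES) holds for some $A,B,C\ge 0$.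
   Context: Conditions on the stochastic gradient (each required for all $x,y\in\mathbb{R}^d$): (M-SG): $\|g(x)\|^2\le \alpha\|\nabla f(x)\|^2$ almost surely. (E-SG): $\mathbb{E}\|g(x)\|^2\le \alpha\|\nabla f(x)\|^2$. (RG): $\mathbb{E}\|g(x)\|^2\le \alpha\|\nabla f(x)\|^2+\beta$. (BV): $\mathbb{E}\|g(x)-\nabla f(x)\|^2\le\sigma^2$. (GC): $\langle\nabla f_i(x),\nabla f_j(x)\rangle\ge -\eta$ for all $i\neq j$. (SS): almost surely in $\xi$, $\|\nabla f_\xi(x)-\nabla f_\xi(y)\|\le L\|x-y\|$ and $f_\xi(x)\ge 0$. (ES): $\mathbb{E}\|g(x)\|^2\le 2A\,(f(x)-f^{\mathrm{inf}})+B\|\nabla f(x)\|^2+C$. Norms are Euclidean. *)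

theory Defs
  imports "HOL-Probability.Probability"
begin

end

theory Submission
  imports Defs
begin

text \<open>
  Parts (1), (2) and (5) are immediate: an almost sure bound integrates to the same bound, and
  E-SG and RG are the special cases \<open>\<beta> = 0\<close> of RG and \<open>A = 0\<close> of ES.
  Part (3) integrates \<open>\<parallel>g\<parallel>\<^sup>2 \<le> 2\<parallel>g - \<nabla>f\<parallel>\<^sup>2 + 2\<parallel>\<nabla>f\<parallel>\<^sup>2\<close>.
  For (4), expanding \<open>\<parallel>\<Sum>\<^sub>i \<nabla>f\<^sub>i\<parallel>\<^sup>2\<close> and bounding each of the \<open>n(n - 1)\<close> cross terms by \<open>-\<eta>\<close> gives
  \<open>(1/n) \<Sum>\<^sub>i \<parallel>\<nabla>f\<^sub>i\<parallel>\<^sup>2 \<le> n \<parallel>\<nabla>f\<parallel>\<^sup>2 + (n - 1) \<eta>\<close>.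
  For (6), the descent lemma applied to one gradient step of length \<open>1/K\<close> shows that a
  nonnegative function \<open>h\<close> with \<open>K\<close>-Lipschitz gradient satisfies \<open>\<parallel>\<nabla>h\<parallel>\<^sup>2 \<le> 2K h\<close>;
  taking expectations gives \<open>\<bbbE>\<parallel>\<nabla>f\<^sub>\<xi>\<parallel>\<^sup>2 \<le> 2K f\<close>.
\<close>

lemma has_real_derivative_along_line:
  fixes h :: "'a::real_inner \<Rightarrow> real"
  assumes "GDERIV h (a + t *\<^sub>R v) :> D"
  shows "((\<lambda>t. h (a + t *\<^sub>R v)) has_real_derivative D \<bullet> v) (at t)"
proof -
  have "((\<lambda>t. a + t *\<^sub>R v) has_derivative (\<lambda>s. s *\<^sub>R v)) (at t)"
    by (auto intro!: derivative_eq_intros)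
  from has_derivative_compose[OF this assms[unfolded gderiv_def]]
  have "((\<lambda>t. h (a + t *\<^sub>R v)) has_derivative (\<lambda>s. (s *\<^sub>R v) \<bullet> D)) (at t)"
    by simp
  moreover have "(\<lambda>s. (s *\<^sub>R v) \<bullet> D) = (*) (D \<bullet> v)"
    by (auto simp: fun_eq_iff inner_commute)
  ultimately show ?thesis
    by (simp add: has_field_derivative_def)
qed

lemma descent_lemma:
  fixes h :: "'a::real_inner \<Rightarrow> real"
  assumes gderiv: "\<And>x. GDERIV h x :> G x"
    and lipschitz: "\<And>x y. norm (G x - G y) \<le> L * norm (x - y)"
  shows "h y \<le> h x + G x \<bullet> (y - x) + L / 2 * norm (y - x) ^ 2"
proof -
  define v where "v = y - x"
  define \<phi> where "\<phi> t = h (x + t *\<^sub>R v) - t * (G x \<bullet> v) - L * t\<^sup>2 / 2 * norm v ^ 2" for t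
  have deriv: "(\<phi> has_real_derivative G (x + t *\<^sub>R v) \<bullet> v - G x \<bullet> v - L * t * norm v ^ 2) (at t)"
    for t
    unfolding \<phi>_def
    by (auto intro!: derivative_eq_intros has_real_derivative_along_line gderiv)
  have "\<phi> 1 \<le> \<phi> 0"
  proof (rule DERIV_nonpos_imp_nonincreasing[of 0 1])
    fix t :: real
    assume t: "0 \<le> t" "t \<le> 1"
    have "G (x + t *\<^sub>R v) \<bullet> v - G x \<bullet> v = (G (x + t *\<^sub>R v) - G x) \<bullet> v"
      by (simp add: inner_diff_left)
    also have "\<dots> \<le> norm (G (x + t *\<^sub>R v) - G x) * norm v"
      by (rule norm_cauchy_schwarz)
    also have "\<dots> \<le> L * norm (t *\<^sub>R v) * norm v"
      using lipschitz[of "x + t *\<^sub>R v" x] by (simp add: mult_right_mono)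
    also have "\<dots> = L * t * norm v ^ 2"
      using t by (simp add: power2_eq_square)
    finally show "\<exists>y. (\<phi> has_real_derivative y) (at t) \<and> y \<le> 0"
      using deriv by force
  qed simp
  then show ?thesis
    unfolding \<phi>_def v_def by simp
qed

lemma norm_gderiv_sq_le:
  fixes h :: "'a::real_inner \<Rightarrow> real"
  assumes gderiv: "\<And>x. GDERIV h x :> G x"
    and lipschitz: "\<And>x y. norm (G x - G y) \<le> L * norm (x - y)"
    and nonneg: "\<And>x. h x \<ge> 0"
    and "L \<le> K" "0 < K"
  shows "norm (G x) ^ 2 \<le> 2 * K * h x"
proof -
  define y where "y = x - (1 / K) *\<^sub>R G x"
  have "0 \<le> h y"
    by (rule nonneg)
  also have "\<dots> \<le> h x + G x \<bullet> (y - x) + L / 2 * norm (y - x) ^ 2"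
    by (rule descent_lemma[OF gderiv lipschitz])
  also have "\<dots> \<le> h x + G x \<bullet> (y - x) + K / 2 * norm (y - x) ^ 2"
    using \<open>L \<le> K\<close> by (simp add: mult_right_mono)
  also have "\<dots> = h x - norm (G x) ^ 2 / (2 * K)"
    using \<open>0 < K\<close> by (simp add: y_def dot_square_norm power2_eq_square field_simps)
  finally show ?thesis
    using \<open>0 < K\<close> by (simp add: field_simps)
qed

lemma GDERIV_unique:
  fixes f :: "'a::real_inner \<Rightarrow> real"
  assumes "GDERIV f x :> a" "GDERIV f x :> b"
  shows "a = b"
proof -
  have "(\<lambda>h. h \<bullet> a) = (\<lambda>h. h \<bullet> b)"
    using has_derivative_unique assms unfolding gderiv_def by blast
  then have "(a - b) \<bullet> (a - b) = 0"
    by (metis inner_diff_right right_minus_eq)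
  then show ?thesis
    by simp
qed

lemma GDERIV_sum:
  fixes F :: "'i \<Rightarrow> 'a::real_inner \<Rightarrow> real"
  assumes "\<And>i. i \<in> S \<Longrightarrow> GDERIV (F i) x :> G i"
  shows "GDERIV (\<lambda>x. \<Sum>i\<in>S. F i x) x :> (\<Sum>i\<in>S. G i)"
  using assms unfolding gderiv_def
  by (auto intro!: derivative_eq_intros simp: inner_sum_right)

definition relaxed_growth ::
    "'w measure \<Rightarrow> ('a \<Rightarrow> 'w \<Rightarrow> 'b::real_normed_vector) \<Rightarrow> ('a \<Rightarrow> 'b) \<Rightarrow> bool" where
  "relaxed_growth M g G \<longleftrightarrow>
     (\<exists>\<alpha>\<ge>0. \<exists>\<beta>\<ge>0. \<forall>x. (\<integral>\<^sup>+ w. ennreal (norm (g x w) ^ 2) \<partial>M)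
                            \<le> ennreal (\<alpha> * norm (G x) ^ 2 + \<beta>))"

definition expected_smoothness ::
    "'w measure \<Rightarrow> ('a \<Rightarrow> 'w \<Rightarrow> 'b::real_normed_vector) \<Rightarrow> ('a \<Rightarrow> real) \<Rightarrow> ('a \<Rightarrow> 'b) \<Rightarrow> bool"
  where
  "expected_smoothness M g f G \<longleftrightarrow>
     (\<exists>A\<ge>0. \<exists>B\<ge>0. \<exists>C\<ge>0. \<forall>x. (\<integral>\<^sup>+ w. ennreal (norm (g x w) ^ 2) \<partial>M)
                            \<le> ennreal (2 * A * (f x - (INF y. f y)) + B * norm (G x) ^ 2 + C))"

lemma relaxed_growth_of_expected_strong_growth:
  assumes "\<And>x. (\<integral>\<^sup>+ w. ennreal (norm (g x w) ^ 2) \<partial>M) \<le> ennreal (\<alpha> * norm (G x) ^ 2)"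
  shows "relaxed_growth M g G"
  unfolding relaxed_growth_def
proof (intro exI conjI allI)
  fix x
  have "\<alpha> * norm (G x) ^ 2 \<le> max \<alpha> 0 * norm (G x) ^ 2 + 0"
    by (simp add: mult_right_mono)
  then show "(\<integral>\<^sup>+ w. ennreal (norm (g x w) ^ 2) \<partial>M) \<le> ennreal (max \<alpha> 0 * norm (G x) ^ 2 + 0)"
    using assms order_trans ennreal_leI by blast
qed auto

lemma expected_smoothness_of_relaxed_growth:
  "relaxed_growth M g G \<Longrightarrow> expected_smoothness M g f G"
  unfolding relaxed_growth_def expected_smoothness_def
  by (intro exI[of _ 0]) auto

lemma norm_sq_le_twice_dist_sq:
  fixes u a :: "'a::real_normed_vector"
  shows "norm u ^ 2 \<le> 2 * norm (u - a) ^ 2 + 2 * norm a ^ 2"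
proof -
  have "norm u \<le> norm (u - a) + norm a"
    using norm_triangle_ineq[of "u - a" a] by simp
  then have "norm u ^ 2 \<le> (norm (u - a) + norm a) ^ 2"
    by (simp add: power_mono)
  also have "\<dots> \<le> 2 * norm (u - a) ^ 2 + 2 * norm a ^ 2"
    using sum_squares_bound[of "norm (u - a)" "norm a"] by (simp add: power2_sum)
  finally show ?thesis .
qed

lemma (in prob_space) nn_integral_norm_sq_le_centered:
  fixes g :: "'a \<Rightarrow> 'b::{real_normed_vector, second_countable_topology}"
  assumes "g \<in> borel_measurable M"
    and centered: "(\<integral>\<^sup>+ w. ennreal (norm (g w - a) ^ 2) \<partial>M) \<le> ennreal s"
    and "0 \<le> s"
  shows "(\<integral>\<^sup>+ w. ennreal (norm (g w) ^ 2) \<partial>M) \<le> ennreal (2 * norm a ^ 2 + 2 * s)"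
proof -
  have "(\<integral>\<^sup>+ w. ennreal (norm (g w) ^ 2) \<partial>M)
      \<le> (\<integral>\<^sup>+ w. 2 * ennreal (norm (g w - a) ^ 2) + ennreal (2 * norm a ^ 2) \<partial>M)"
  proof (rule nn_integral_mono)
    fix w
    have "ennreal (norm (g w) ^ 2) \<le> ennreal (2 * norm (g w - a) ^ 2 + 2 * norm a ^ 2)"
      by (intro ennreal_leI norm_sq_le_twice_dist_sq)
    then show "ennreal (norm (g w) ^ 2) \<le> 2 * ennreal (norm (g w - a) ^ 2) + ennreal (2 * norm a ^ 2)"
      by (simp add: ennreal_plus ennreal_mult)
  qed
  also have "\<dots> = 2 * (\<integral>\<^sup>+ w. ennreal (norm (g w - a) ^ 2) \<partial>M) + ennreal (2 * norm a ^ 2)"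
    using \<open>g \<in> borel_measurable M\<close>
    by (subst nn_integral_add) (auto simp: nn_integral_cmult emeasure_space_1)
  also have "\<dots> \<le> 2 * ennreal s + ennreal (2 * norm a ^ 2)"
    using centered by (intro add_mono mult_left_mono) auto
  also have "\<dots> = ennreal (2 * norm a ^ 2 + 2 * s)"
    using \<open>0 \<le> s\<close> by (simp add: ennreal_plus ennreal_mult)
  finally show ?thesis .
qed

lemma (in prob_space) relaxed_growth_of_bounded_variance:
  fixes g :: "'x \<Rightarrow> 'a \<Rightarrow> 'b::{real_normed_vector, second_countable_topology}"
  assumes "\<And>x. g x \<in> borel_measurable M"
    and "\<And>x. (\<integral>\<^sup>+ w. ennreal (norm (g x w - G x) ^ 2) \<partial>M) \<le> ennreal (\<sigma> ^ 2)"
  shows "relaxed_growth M g G"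
  unfolding relaxed_growth_def
proof (intro exI conjI allI)
  show "(\<integral>\<^sup>+ w. ennreal (norm (g x w) ^ 2) \<partial>M) \<le> ennreal (2 * norm (G x) ^ 2 + 2 * \<sigma>\<^sup>2)" for x
    using assms by (intro nn_integral_norm_sq_le_centered) auto
qed auto

lemma sum_norm_sq_le_norm_sum_sq:
  fixes v :: "'i \<Rightarrow> 'a::real_inner"
  assumes "finite S"
    and confusion: "\<And>i j. i \<in> S \<Longrightarrow> j \<in> S \<Longrightarrow> i \<noteq> j \<Longrightarrow> v i \<bullet> v j \<ge> - \<eta>"
  shows "(\<Sum>i\<in>S. norm (v i) ^ 2) \<le> norm (\<Sum>i\<in>S. v i) ^ 2 + real (card S) * (real (card S) - 1) * \<eta>"
proof -
  have row: "norm (v i) ^ 2 - (real (card S) - 1) * \<eta> \<le> (\<Sum>j\<in>S. v i \<bullet> v j)" if "i \<in> S" for i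
  proof -
    have "(\<Sum>j\<in>S - {i}. - \<eta>) \<le> (\<Sum>j\<in>S - {i}. v i \<bullet> v j)"
      using confusion \<open>i \<in> S\<close> by (intro sum_mono) auto
    moreover have "(\<Sum>j\<in>S. v i \<bullet> v j) = v i \<bullet> v i + (\<Sum>j\<in>S - {i}. v i \<bullet> v j)"
      using \<open>finite S\<close> \<open>i \<in> S\<close> by (simp add: sum.remove)
    moreover have "real (card (S - {i})) = real (card S) - 1"
      by (simp add: card_Suc_Diff1[OF \<open>finite S\<close> \<open>i \<in> S\<close>, symmetric])
    ultimately show ?thesis
      by (simp add: dot_square_norm)
  qed
  have "norm (\<Sum>i\<in>S. v i) ^ 2 = (\<Sum>i\<in>S. \<Sum>j\<in>S. v i \<bullet> v j)"
    by (simp add: power2_norm_eq_inner inner_sum_left inner_sum_right) (rule sum.swap)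
  also have "\<dots> \<ge> (\<Sum>i\<in>S. norm (v i) ^ 2 - (real (card S) - 1) * \<eta>)"
    using row by (intro sum_mono) auto
  finally show ?thesis
    by (simp add: sum_subtractf)
qed

lemma relaxed_growth_uniform_sampling:
  fixes F :: "'i \<Rightarrow> 'a::real_inner \<Rightarrow> real" and v :: "'i \<Rightarrow> 'a \<Rightarrow> 'a"
  assumes "finite S" "S \<noteq> {}"
    and gderiv_f: "\<And>x. GDERIV f x :> G x"
    and mean: "\<And>x. f x = (1 / real (card S)) * (\<Sum>i\<in>S. F i x)"
    and gderiv_F: "\<And>i x. i \<in> S \<Longrightarrow> GDERIV (F i) x :> v i x"
    and confusion: "\<And>i j x. i \<in> S \<Longrightarrow> j \<in> S \<Longrightarrow> i \<noteq> j \<Longrightarrow> v i x \<bullet> v j x \<ge> - \<eta>"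
    and "0 \<le> \<eta>"
  shows "relaxed_growth (measure_pmf (pmf_of_set S)) (\<lambda>x i. v i x) G"
  unfolding relaxed_growth_def
proof (intro exI conjI allI)
  define n where "n = real (card S)"
  have "1 \<le> n"
    using \<open>finite S\<close> \<open>S \<noteq> {}\<close> by (simp add: n_def Suc_leI card_gt_0_iff)
  fix x
  have "GDERIV (\<lambda>x. \<Sum>i\<in>S. F i x) x :> (\<Sum>i\<in>S. v i x)"
    using gderiv_F by (rule GDERIV_sum)
  from GDERIV_mult[OF GDERIV_const[of "1 / n"] this]
  have "GDERIV f x :> (1 / n) *\<^sub>R (\<Sum>i\<in>S. v i x)"
    unfolding mean[abs_def] n_def by simp
  then have G: "G x = (1 / n) *\<^sub>R (\<Sum>i\<in>S. v i x)"
    using GDERIV_unique gderiv_f by blast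
  have "(\<Sum>i\<in>S. norm (v i x) ^ 2) / n \<le> (norm (\<Sum>i\<in>S. v i x) ^ 2 + n * (n - 1) * \<eta>) / n"
    using sum_norm_sq_le_norm_sum_sq[OF \<open>finite S\<close> confusion] \<open>1 \<le> n\<close>
    by (simp add: n_def divide_right_mono)
  also have "\<dots> = n * norm (G x) ^ 2 + (n - 1) * \<eta>"
    using \<open>1 \<le> n\<close> by (simp add: G power2_eq_square field_simps)
  finally have bound: "(\<Sum>i\<in>S. norm (v i x) ^ 2) / n \<le> n * norm (G x) ^ 2 + (n - 1) * \<eta>" .
  have "(\<integral>\<^sup>+ i. ennreal (norm (v i x) ^ 2) \<partial>measure_pmf (pmf_of_set S))
      = ennreal ((\<Sum>i\<in>S. norm (v i x) ^ 2) / n)"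
    using \<open>finite S\<close> \<open>S \<noteq> {}\<close> \<open>1 \<le> n\<close>
    by (simp add: nn_integral_pmf_of_set n_def sum_ennreal divide_ennreal sum_nonneg
        ennreal_of_nat_eq_real_of_nat)
  also have "\<dots> \<le> ennreal (n * norm (G x) ^ 2 + (n - 1) * \<eta>)"
    using bound by (rule ennreal_leI)
  finally show "(\<integral>\<^sup>+ i. ennreal (norm (v i x) ^ 2) \<partial>measure_pmf (pmf_of_set S))
      \<le> ennreal (n * norm (G x) ^ 2 + (n - 1) * \<eta>)" .
  show "0 \<le> n" "0 \<le> (n - 1) * \<eta>"
    using \<open>1 \<le> n\<close> \<open>0 \<le> \<eta>\<close> by auto
qed

lemma (in prob_space) expected_smoothness_of_smooth_nonneg:
  fixes F :: "'a \<Rightarrow> 'b::real_inner \<Rightarrow> real"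
  assumes gderiv: "\<And>\<xi> x. GDERIV (F \<xi>) x :> G \<xi> x"
    and integrable: "\<And>x. integrable M (\<lambda>\<xi>. F \<xi> x)"
    and mean: "\<And>x. f x = expectation (\<lambda>\<xi>. F \<xi> x)"
    and smooth: "AE \<xi> in M. \<forall>x y. norm (G \<xi> x - G \<xi> y) \<le> L * norm (x - y) \<and> F \<xi> x \<ge> 0"
  shows "expected_smoothness M (\<lambda>x \<xi>. G \<xi> x) f Gf"
proof -
  \<comment> \<open>\<open>L\<close> itself may be \<open>0\<close>, but the gradient step needs a positive constant\<close>
  define K where "K = max L 0 + 1"
  have K: "L \<le> K" "0 < K"
    by (auto simp: K_def)
  have F_nonneg: "AE \<xi> in M. 0 \<le> F \<xi> x" for x
    using smooth by (rule AE_mp) auto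
  have "0 \<le> f x" for x
    unfolding mean using F_nonneg by (rule integral_nonneg_AE)
  then have INF_nonneg: "0 \<le> (INF y. f y)"
    by (intro cINF_greatest) auto
  have bound: "(\<integral>\<^sup>+ \<xi>. ennreal (norm (G \<xi> x) ^ 2) \<partial>M) \<le> ennreal (2 * K * f x)" for x
  proof -
    have "AE \<xi> in M. norm (G \<xi> x) ^ 2 \<le> 2 * K * F \<xi> x"
      using smooth by (rule AE_mp) (auto intro!: norm_gderiv_sq_le[OF gderiv _ _ K])
    then have "(\<integral>\<^sup>+ \<xi>. ennreal (norm (G \<xi> x) ^ 2) \<partial>M) \<le> (\<integral>\<^sup>+ \<xi>. ennreal (2 * K * F \<xi> x) \<partial>M)"
      by (intro nn_integral_mono_AE) (auto elim!: AE_mp intro: ennreal_leI)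
    also have "\<dots> = ennreal (2 * K * f x)"
    proof -
      have "AE \<xi> in M. 0 \<le> 2 * K * F \<xi> x"
        using F_nonneg[of x] by eventually_elim (use K in simp)
      then show ?thesis
        unfolding mean using integrable by (subst nn_integral_eq_integral) auto
    qed
    finally show ?thesis .
  qed
  show ?thesis
    unfolding expected_smoothness_def
  proof (intro exI conjI allI)
    show "(\<integral>\<^sup>+ \<xi>. ennreal (norm (G \<xi> x) ^ 2) \<partial>M)
        \<le> ennreal (2 * K * (f x - (INF y. f y)) + 0 * norm (Gf x) ^ 2 + 2 * K * (INF y. f y))" for x
      using bound[of x] by (simp add: algebra_simps)
  qed (use K INF_nonneg in auto)
qed

theorem theorem1:
  fixes f :: "real ^ 'n \<Rightarrow> real"
    and gradf :: "real ^ 'n \<Rightarrow> real ^ 'n"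
    and L :: real
    and M :: "'w measure"
    and g :: "real ^ 'n \<Rightarrow> 'w \<Rightarrow> real ^ 'n"
  assumes grad: "\<forall>x. GDERIV f x :> gradf x"
    and bdd: "bdd_below (range f)"
    and lip: "\<forall>x y. norm (gradf x - gradf y) \<le> L * norm (x - y)"
    and M: "prob_space M"
    and unbiased: "\<forall>x. integrable M (g x) \<and> (\<integral>w. g x w \<partial>M) = gradf x"
  shows
   \<comment> \<open>(1) M-SG implies E-SG\<close>
   "((\<exists>\<alpha>\<ge>0. \<forall>x. AE w in M. norm (g x w) ^ 2 \<le> \<alpha> * norm (gradf x) ^ 2)
       \<longrightarrow> (\<exists>\<alpha>\<ge>0. \<forall>x. (\<integral>\<^sup>+ w. ennreal (norm (g x w) ^ 2) \<partial>M)
                              \<le> ennreal (\<alpha> * norm (gradf x) ^ 2)))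
    \<and>
   \<comment> \<open>(2) E-SG implies RG\<close>
    ((\<exists>\<alpha>. \<forall>x. (\<integral>\<^sup>+ w. ennreal (norm (g x w) ^ 2) \<partial>M) \<le> ennreal (\<alpha> * norm (gradf x) ^ 2))
       \<longrightarrow> (\<exists>\<alpha>\<ge>0. \<exists>\<beta>\<ge>0. \<forall>x. (\<integral>\<^sup>+ w. ennreal (norm (g x w) ^ 2) \<partial>M)
                              \<le> ennreal (\<alpha> * norm (gradf x) ^ 2 + \<beta>)))
    \<and>
   \<comment> \<open>(3) BV implies RG\<close>
    ((\<exists>\<sigma>\<ge>0. \<forall>x. (\<integral>\<^sup>+ w. ennreal (norm (g x w - gradf x) ^ 2) \<partial>M) \<le> ennreal (\<sigma> ^ 2))
       \<longrightarrow> (\<exists>\<alpha>\<ge>0. \<exists>\<beta>\<ge>0. \<forall>x. (\<integral>\<^sup>+ w. ennreal (norm (g x w) ^ 2) \<partial>M)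
                              \<le> ennreal (\<alpha> * norm (gradf x) ^ 2 + \<beta>)))
    \<and>
   \<comment> \<open>(4) finite sum with uniform sampling and GC implies RG\<close>
    (\<forall>(n::nat) (fi :: nat \<Rightarrow> real ^ 'n \<Rightarrow> real) (gi :: nat \<Rightarrow> real ^ 'n \<Rightarrow> real ^ 'n) (\<eta>::real).
       n \<ge> 1
       \<longrightarrow> (\<forall>x. f x = (1 / real n) * (\<Sum>i=1..n. fi i x))
       \<longrightarrow> (\<forall>i\<in>{1..n}. \<forall>x. GDERIV (fi i) x :> gi i x)
       \<longrightarrow> \<eta> > 0
       \<longrightarrow> (\<forall>i\<in>{1..n}. \<forall>j\<in>{1..n}. i \<noteq> j \<longrightarrow> (\<forall>x. gi i x \<bullet> gi j x \<ge> - \<eta>))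
       \<longrightarrow> (\<exists>\<alpha>\<ge>0. \<exists>\<beta>\<ge>0. \<forall>x.
              (\<integral>\<^sup>+ i. ennreal (norm (gi i x) ^ 2) \<partial>(measure_pmf (pmf_of_set {1..n})))
                \<le> ennreal (\<alpha> * norm (gradf x) ^ 2 + \<beta>)))
    \<and>
   \<comment> \<open>(5) RG implies ES\<close>
    ((\<exists>\<alpha>\<ge>0. \<exists>\<beta>\<ge>0. \<forall>x. (\<integral>\<^sup>+ w. ennreal (norm (g x w) ^ 2) \<partial>M)
                              \<le> ennreal (\<alpha> * norm (gradf x) ^ 2 + \<beta>))
       \<longrightarrow> (\<exists>A\<ge>0. \<exists>B\<ge>0. \<exists>C\<ge>0. \<forall>x. (\<integral>\<^sup>+ w. ennreal (norm (g x w) ^ 2) \<partial>M)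
              \<le> ennreal (2 * A * (f x - (INF y. f y)) + B * norm (gradf x) ^ 2 + C)))
    \<and>
   \<comment> \<open>(6) expectation of a.s. smooth nonnegative functions (SS) implies ES\<close>
    (\<forall>(D :: 'c measure) (fxi :: 'c \<Rightarrow> real ^ 'n \<Rightarrow> real) (gxi :: 'c \<Rightarrow> real ^ 'n \<Rightarrow> real ^ 'n).
       prob_space D
       \<longrightarrow> (\<forall>\<xi> x. GDERIV (fxi \<xi>) x :> gxi \<xi> x)
       \<longrightarrow> (\<forall>x. integrable D (\<lambda>\<xi>. fxi \<xi> x) \<and> f x = (\<integral>\<xi>. fxi \<xi> x \<partial>D))
       \<longrightarrow> (\<forall>x. integrable D (\<lambda>\<xi>. gxi \<xi> x) \<and> (\<integral>\<xi>. gxi \<xi> x \<partial>D) = gradf x)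
       \<longrightarrow> (AE \<xi> in D. \<forall>x y. norm (gxi \<xi> x - gxi \<xi> y) \<le> L * norm (x - y) \<and> fxi \<xi> x \<ge> 0)
       \<longrightarrow> (\<exists>A\<ge>0. \<exists>B\<ge>0. \<exists>C\<ge>0. \<forall>x. (\<integral>\<^sup>+ \<xi>. ennreal (norm (gxi \<xi> x) ^ 2) \<partial>D)
              \<le> ennreal (2 * A * (f x - (INF y. f y)) + B * norm (gradf x) ^ 2 + C)))"
  using M unbiased grad
  apply (intro conjI impI allI)
  subgoal
    by (fastforce intro!: subprob_space.nn_integral_le_const[OF prob_space_imp_subprob_space[OF M]]
        elim!: AE_mp intro: ennreal_leI)
  subgoal
    using relaxed_growth_of_expected_strong_growth unfolding relaxed_growth_def by blast
  subgoal
    using prob_space.relaxed_growth_of_bounded_variance[OF M, of g gradf]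
    unfolding relaxed_growth_def by (blast intro: borel_measurable_integrable)
  subgoal for n fi gi \<eta>
    using relaxed_growth_uniform_sampling[of "{1..n}" f gradf fi gi \<eta>]
    unfolding relaxed_growth_def by auto
  subgoal
    using expected_smoothness_of_relaxed_growth unfolding relaxed_growth_def expected_smoothness_def
    by blast
  subgoal for D fxi gxi
    using prob_space.expected_smoothness_of_smooth_nonneg[of D fxi gxi f L gradf]
    unfolding expected_smoothness_def by auto
  done

end
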